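(* Let $q\leqslant n+1$. For any nonzero $\psi=(F,G)\in\mathcal H_{\mathbf d}[q\,;\,s]$, $\kappa_*(\psi)\leqslant\dfrac{\|\psi\|}{d(\psi,\Sigma_* )}$, where distance and norm are those induced by the Weyl inner product.
   Context: $\mathcal H_{\mathbf d}[q]$: $q$-tuples of real homogeneous polynomials in $X_0,\dots,X_n$ of degrees $d_1,\dots,d_q$ with the Weyl inner product ($\langle h,h'\rangle=\sum_{|a|=d}\binom{d}{a}^{-1}h_ah'_a$ for degree-$d$ forms with coefficients $h_a,h'_a$, $\binom da$ multinomial; summed over components). $\mathcal H_{\mathbf d}[q\,;\,s]$: pairs $(F,G)$ with $F$ a $q$-tuple and $G$ an $s$-tuple, i.e. $\mathcal H_{\mathbf d}[q+s]$. For $F\in\mathcal H_{\mathbf d}[q]$, $x\in\mathbb S^n$: $T_x=\{x\}^\perp$, $\Delta=\mathrm{diag}(\sqrt{d_i})$, $\mu_{\mathrm{proj}}(F,x)=\|F\|\,\|(\mathrm DF(x)|_{T_x})^\dagger\Delta\|$ if $\mathrm DF(x)|_{T_x}$ surjective, else $\infty$; $\kappa(F,x)=(\mu_{\mathrm{proj}}(F,x)^{-2}+\|F(x)\|^2/\|F\|^2)^{-1/2}$ (conventions $\infty^{-1}=0$, $0^{-1}=\infty$, $\kappa(0,x)=\infty$); $\kappa(F)=\max_{x\in\mathbb S^n}\kappa(F,x)$. For a subtuple $L$ of $G$, $F^L$ is $F$ with the polynomials of $L$ appended. $\kappa_*(F,G)=\max\{\kappa(F^L):L\subseteq G,\ q+|L|\leq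 n+1\}$, and $\Sigma_*=\{\psi\in\mathcal H_{\mathbf d}[q\,;\,s]:\kappa_*(\psi)=\infty\}$. *)

theory Defs
  imports Complex_Main "HOL-Library.Extended_Real"
begin

text \<open>Variables X_0..X_n; a point x is a function nat => real whose
components beyond n are zero. A homogeneous polynomial of degree k is given by its
coefficient function on exponent vectors a :: nat => nat (supported in {0..n},
total degree k). A system of polynomials is a function nat => (coefficients);
a subsystem is selected by a finite index set I; d :: nat => nat gives the degrees.\<close>

definition mons :: "nat \<Rightarrow> nat \<Rightarrow> (nat \<Rightarrow> nat) set" where
  "mons n k = {a. (\<forall>i. n < i \<longrightarrow> a i = 0) \<and> sum a {..n} = k}"

definition multinom :: "nat \<Rightarrow> nat \<Rightarrow> (nat \<Rightarrow> nat) \<Rightarrow> real" where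
  "multinom n k a = fact k / (\<Prod>j\<le>n. fact (a j))"

definition Hd :: "nat \<Rightarrow> (nat \<Rightarrow> nat) \<Rightarrow> nat \<Rightarrow> (nat \<Rightarrow> (nat \<Rightarrow> nat) \<Rightarrow> real) set" where
  "Hd n d N = {P. \<forall>i a. (N \<le> i \<or> a \<notin> mons n (d i)) \<longrightarrow> P i a = 0}"

definition weyl_inner :: "nat \<Rightarrow> (nat \<Rightarrow> nat) \<Rightarrow> nat set
    \<Rightarrow> (nat \<Rightarrow> (nat \<Rightarrow> nat) \<Rightarrow> real) \<Rightarrow> (nat \<Rightarrow> (nat \<Rightarrow> nat) \<Rightarrow> real) \<Rightarrow> real" where
  "weyl_inner n d I P Q = (\<Sum>i\<in>I. \<Sum>a\<in>mons n (d i). P i a * Q i a / multinom n (d i) a)"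

definition weyl_norm :: "nat \<Rightarrow> (nat \<Rightarrow> nat) \<Rightarrow> nat set \<Rightarrow> (nat \<Rightarrow> (nat \<Rightarrow> nat) \<Rightarrow> real) \<Rightarrow> real" where
  "weyl_norm n d I P = sqrt (weyl_inner n d I P P)"

definition peval :: "nat \<Rightarrow> nat \<Rightarrow> ((nat \<Rightarrow> nat) \<Rightarrow> real) \<Rightarrow> (nat \<Rightarrow> real) \<Rightarrow> real" where
  "peval n k p x = (\<Sum>a\<in>mons n k. p a * (\<Prod>j\<le>n. x j ^ a j))"

definition pderiv_at :: "nat \<Rightarrow> nat \<Rightarrow> ((nat \<Rightarrow> nat) \<Rightarrow> real) \<Rightarrow> nat \<Rightarrow> (nat \<Rightarrow> real) \<Rightarrow> real" where
  "pderiv_at n k p j x = (\<Sum>a\<in>mons n k. p a * real (a j) *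
      (\<Prod>l\<le>n. x l ^ (if l = j then a l - 1 else a l)))"

definition DF :: "nat \<Rightarrow> (nat \<Rightarrow> nat) \<Rightarrow> (nat \<Rightarrow> (nat \<Rightarrow> nat) \<Rightarrow> real)
    \<Rightarrow> (nat \<Rightarrow> real) \<Rightarrow> (nat \<Rightarrow> real) \<Rightarrow> nat \<Rightarrow> real" where
  "DF n d P x u = (\<lambda>i. \<Sum>j\<le>n. pderiv_at n (d i) (P i) j x * u j)"

definition sphere_n :: "nat \<Rightarrow> (nat \<Rightarrow> real) set" where
  "sphere_n n = {x. (\<forall>i. n < i \<longrightarrow> x i = 0) \<and> (\<Sum>j\<le>n. (x j)\<^sup>2) = 1}"

definition tangent :: "nat \<Rightarrow> (nat \<Rightarrow> real) \<Rightarrow> (nat \<Rightarrow> real) set" where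
  "tangent n x = {u. (\<forall>i. n < i \<longrightarrow> u i = 0) \<and> (\<Sum>j\<le>n. u j * x j) = 0}"

definition surj_on_T :: "nat \<Rightarrow> (nat \<Rightarrow> nat) \<Rightarrow> nat set \<Rightarrow> (nat \<Rightarrow> (nat \<Rightarrow> nat) \<Rightarrow> real)
    \<Rightarrow> (nat \<Rightarrow> real) \<Rightarrow> bool" where
  "surj_on_T n d I P x = (\<forall>w. \<exists>u\<in>tangent n x. \<forall>i\<in>I. DF n d P x u i = w i)"

text \<open>Moore-Penrose pseudoinverse of the (surjective) map DF(x)|_{T_x} : T_x -> R^I,
  applied to w: the unique preimage in T_x orthogonal to the kernel.\<close>
definition pinv :: "nat \<Rightarrow> (nat \<Rightarrow> nat) \<Rightarrow> nat set \<Rightarrow> (nat \<Rightarrow> (nat \<Rightarrow> nat) \<Rightarrow> real)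
    \<Rightarrow> (nat \<Rightarrow> real) \<Rightarrow> (nat \<Rightarrow> real) \<Rightarrow> (nat \<Rightarrow> real)" where
  "pinv n d I P x w = (THE u. u \<in> tangent n x \<and> (\<forall>i\<in>I. DF n d P x u i = w i) \<and>
      (\<forall>v\<in>tangent n x. (\<forall>i\<in>I. DF n d P x v i = 0) \<longrightarrow> (\<Sum>j\<le>n. u j * v j) = 0))"

text \<open>Operator norm of (DF(x)|_{T_x})^dagger Delta, Delta = diag(sqrt d_i).\<close>
definition pinv_Delta_norm :: "nat \<Rightarrow> (nat \<Rightarrow> nat) \<Rightarrow> nat set \<Rightarrow> (nat \<Rightarrow> (nat \<Rightarrow> nat) \<Rightarrow> real)
    \<Rightarrow> (nat \<Rightarrow> real) \<Rightarrow> real" where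
  "pinv_Delta_norm n d I P x = Sup {sqrt (\<Sum>j\<le>n. (pinv n d I P x (\<lambda>i. sqrt (real (d i)) * w i) j)\<^sup>2)
       | w. (\<Sum>i\<in>I. (w i)\<^sup>2) \<le> 1}"

definition mu_proj :: "nat \<Rightarrow> (nat \<Rightarrow> nat) \<Rightarrow> nat set \<Rightarrow> (nat \<Rightarrow> (nat \<Rightarrow> nat) \<Rightarrow> real)
    \<Rightarrow> (nat \<Rightarrow> real) \<Rightarrow> ereal" where
  "mu_proj n d I P x = (if surj_on_T n d I P x
      then ereal (weyl_norm n d I P * pinv_Delta_norm n d I P x) else \<infinity>)"

text \<open>kappa(F,x) with conventions inverse(infinity) = 0, inverse 0 = infinity, kappa(0,x) = infinity.\<close>
definition kappa_at :: "nat \<Rightarrow> (nat \<Rightarrow> nat) \<Rightarrow> nat set \<Rightarrow> (nat \<Rightarrow> (nat \<Rightarrow> nat) \<Rightarrow> real)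
    \<Rightarrow> (nat \<Rightarrow> real) \<Rightarrow> ereal" where
  "kappa_at n d I P x =
    (if weyl_norm n d I P = 0 then \<infinity> else
      (let m = mu_proj n d I P x;
           minv2 = (if m = \<infinity> then 0 else if m = 0 then \<infinity> else ereal (1 / (real_of_ereal m)\<^sup>2));
           t = minv2 + ereal ((\<Sum>i\<in>I. (peval n (d i) (P i) x)\<^sup>2) / (weyl_norm n d I P)\<^sup>2)
       in if t = \<infinity> then 0 else if t = 0 then \<infinity> else ereal (1 / sqrt (real_of_ereal t))))"

definition kappa :: "nat \<Rightarrow> (nat \<Rightarrow> nat) \<Rightarrow> nat set \<Rightarrow> (nat \<Rightarrow> (nat \<Rightarrow> nat) \<Rightarrow> real) \<Rightarrow> ereal" where
  "kappa n d I P = (SUP x\<in>sphere_n n. kappa_at n d I P x)"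

text \<open>kappa_*(F,G) for F = components 0..q-1, G = components q..q+s-1: the maximum of
  kappa(F^L) over subtuples L of G with q + |L| <= n+1.\<close>
definition kappa_star :: "nat \<Rightarrow> (nat \<Rightarrow> nat) \<Rightarrow> nat \<Rightarrow> nat \<Rightarrow> (nat \<Rightarrow> (nat \<Rightarrow> nat) \<Rightarrow> real) \<Rightarrow> ereal" where
  "kappa_star n d q s P = (SUP L\<in>{L. L \<subseteq> {q..<q+s} \<and> q + card L \<le> n + 1}.
       kappa n d ({..<q} \<union> L) P)"

definition Sigma_star :: "nat \<Rightarrow> (nat \<Rightarrow> nat) \<Rightarrow> nat \<Rightarrow> nat \<Rightarrow> (nat \<Rightarrow> (nat \<Rightarrow> nat) \<Rightarrow> real) set" where
  "Sigma_star n d q s = {P \<in> Hd n d (q + s). kappa_star n d q s P = \<infinity>}"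

definition dist_Sigma_star :: "nat \<Rightarrow> (nat \<Rightarrow> nat) \<Rightarrow> nat \<Rightarrow> nat \<Rightarrow> (nat \<Rightarrow> (nat \<Rightarrow> nat) \<Rightarrow> real) \<Rightarrow> real" where
  "dist_Sigma_star n d q s P = Inf ((\<lambda>Q. weyl_norm n d {..<q+s} (\<lambda>i a. P i a - Q i a)) ` Sigma_star n d q s)"

end

theory Submission
  imports Defs
begin

text \<open>Fix a subsystem F^L, a point x of the sphere, and put N = \<parallel>F^L\<parallel>, S = \<Sum> F_i(x)^2 and
  \<delta> = d(\<psi>, \<Sigma>_*). The forms K_x = \<langle>x, X\<rangle>^k and J_{x,u} = \<langle>x, X\<rangle>^{k-1} \<langle>u, X\<rangle> (u \<in> T_x)
  reproduce evaluation at x and derivation at x along u for the Weyl inner product, are orthogonal,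
  and have squared norms 1 and |u|^2 / k. Replacing F_i by F_i - F_i(x) K_x - c_i J_{x,u} therefore
  produces a system vanishing at x whose derivative on T_x is DF(x) - c \<langle>-, u\<rangle>, at squared
  distance S + \<Sum> c_i^2 |u|^2 / d_i from \<psi>. If DF(x) is not onto, c = 0 already gives a point
  of \<Sigma>_*, so \<delta>^2 \<le> S. Otherwise take u = (DF(x)|T_x)^\<dagger> \<Delta> w with |w| \<le> 1 and
  c = \<Delta> w / |u|^2; the perturbed derivative then misses \<Delta> w, so \<delta>^2 \<le> S + 1 / |u|^2, and
  taking the supremum over w gives \<delta>^2 \<le> S + N^2 / \<mu>_proj(F^L, x)^2. This is
  \<kappa>(F^L, x) \<le> N / \<delta> \<le> \<parallel>\<psi>\<parallel> / \<delta>.\<close>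

section \<open>Monomials and the multinomial theorem\<close>

abbreviation monomial_at :: "nat \<Rightarrow> (nat \<Rightarrow> real) \<Rightarrow> (nat \<Rightarrow> nat) \<Rightarrow> real" where
  "monomial_at n x a \<equiv> \<Prod>j\<le>n. x j ^ a j"

lemma mons_le: "a \<in> mons n k \<Longrightarrow> j \<le> n \<Longrightarrow> a j \<le> k"
  unfolding mons_def by (auto intro!: member_le_sum[where f=a and A="{..n}" and i=j, simplified])

lemma mons_outside: "a \<in> mons n k \<Longrightarrow> n < j \<Longrightarrow> a j = 0"
  unfolding mons_def by auto

lemma finite_mons: "finite (mons n k)"
proof (rule finite_subset)
  show "mons n k \<subseteq> {a. \<forall>j. (j \<in> {..n} \<longrightarrow> a j \<in> {..k}) \<and> (j \<notin> {..n} \<longrightarrow> a j = 0)}"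
  proof
    fix a assume "a \<in> mons n k"
    then show "a \<in> {a. \<forall>j. (j \<in> {..n} \<longrightarrow> a j \<in> {..k}) \<and> (j \<notin> {..n} \<longrightarrow> a j = 0)}"
      using mons_le mons_outside by auto
  qed
qed (rule finite_set_of_finite_funs; simp)

lemma mons_0: "mons n 0 = {\<lambda>_. 0}"
proof -
  have "a = (\<lambda>_. 0)" if a: "a \<in> mons n 0" for a
  proof
    fix j show "a j = 0"
      using mons_le[OF a, of j] mons_outside[OF a, of j] by (cases "j \<le> n") auto
  qed
  then show ?thesis by (auto simp: mons_def)
qed

lemma multinom_pos: "multinom n k a > 0"
  unfolding multinom_def by (auto intro!: divide_pos_pos prod_pos)

definition raise_exp :: "nat \<Rightarrow> (nat \<Rightarrow> nat) \<Rightarrow> nat \<Rightarrow> nat" where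
  "raise_exp l b = b(l := Suc (b l))"

lemma inj_raise_exp: "inj (raise_exp l)"
  by (rule injI) (auto simp: raise_exp_def fun_eq_iff split: if_splits)

lemma raise_exp_image:
  assumes l: "l \<le> n"
  shows "raise_exp l ` mons n k = {a \<in> mons n (Suc k). 0 < a l}"
proof (intro equalityI subsetI)
  fix a assume "a \<in> raise_exp l ` mons n k"
  then obtain b where b: "b \<in> mons n k" and ab: "a = raise_exp l b" by auto
  have "sum a ({..n} - {l}) = sum b ({..n} - {l})"
    by (rule sum.cong) (auto simp: ab raise_exp_def)
  then have "sum a {..n} = Suc (sum b {..n})"
    using l by (simp add: sum.remove ab raise_exp_def)
  then show "a \<in> {a \<in> mons n (Suc k). 0 < a l}"
    using b l by (auto simp: mons_def ab raise_exp_def)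
next
  fix a assume a: "a \<in> {a \<in> mons n (Suc k). 0 < a l}"
  define b where "b = a(l := a l - 1)"
  have ab: "a = raise_exp l b"
    using a by (auto simp: b_def raise_exp_def fun_eq_iff)
  have "sum a ({..n} - {l}) = sum b ({..n} - {l})"
    by (rule sum.cong) (auto simp: b_def)
  then have "sum a {..n} = Suc (sum b {..n})"
    using a l by (simp add: sum.remove b_def)
  then have "b \<in> mons n k"
    using a l by (auto simp: mons_def b_def)
  then show "a \<in> raise_exp l ` mons n k"
    using ab by auto
qed

lemma monomial_at_raise_exp:
  assumes "l \<le> n"
  shows "monomial_at n w (raise_exp l b) = w l * monomial_at n w b"
proof -
  have "(\<Prod>j\<in>{..n}-{l}. w j ^ raise_exp l b j) = (\<Prod>j\<in>{..n}-{l}. w j ^ b j)"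
    by (rule prod.cong) (auto simp: raise_exp_def)
  then show ?thesis
    using assms by (simp add: prod.remove raise_exp_def)
qed

lemma multinom_raise_exp:
  assumes "l \<le> n"
  shows "real (Suc (b l)) * multinom n (Suc k) (raise_exp l b) = real (Suc k) * multinom n k b"
proof -
  have "(\<Prod>j\<in>{..n}-{l}. (fact (raise_exp l b j)::real)) = (\<Prod>j\<in>{..n}-{l}. fact (b j))"
    by (rule prod.cong) (auto simp: raise_exp_def)
  moreover have "(\<Prod>j\<in>{..n}-{l}. (fact (b j)::real)) > 0"
    by (rule prod_pos) auto
  ultimately show ?thesis
    using assms unfolding multinom_def
    by (simp add: prod.remove raise_exp_def field_simps fact_Suc del: of_nat_Suc)
qed

lemma sum_mons_raise_exp:
  fixes w :: "nat \<Rightarrow> real"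
  assumes l: "l \<le> n"
  shows "(\<Sum>b\<in>mons n k. multinom n k b * monomial_at n w (raise_exp l b))
       = (\<Sum>a\<in>mons n (Suc k). real (a l) / real (Suc k) * multinom n (Suc k) a * monomial_at n w a)"
proof -
  let ?g = "\<lambda>a. real (a l) / real (Suc k) * multinom n (Suc k) a * monomial_at n w a"
  have "(\<Sum>a\<in>mons n (Suc k). ?g a) = (\<Sum>a\<in>{a \<in> mons n (Suc k). 0 < a l}. ?g a)"
    by (rule sum.mono_neutral_right) (auto simp: finite_mons)
  also have "\<dots> = (\<Sum>b\<in>mons n k. ?g (raise_exp l b))"
    unfolding raise_exp_image[OF l, symmetric]
    by (rule sum.reindex[unfolded comp_def]) (meson inj_raise_exp inj_on_subset subset_UNIV)
  also have "\<dots> = (\<Sum>b\<in>mons n k. multinom n k b * monomial_at n w (raise_exp l b))"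
    using multinom_raise_exp[OF l]
    by (intro sum.cong) (simp_all add: raise_exp_def field_simps del: of_nat_Suc)
  finally show ?thesis ..
qed

theorem multinomial_theorem:
  fixes w :: "nat \<Rightarrow> real"
  shows "(\<Sum>a\<in>mons n k. multinom n k a * monomial_at n w a) = (\<Sum>j\<le>n. w j) ^ k"
proof (induction k)
  case 0
  show ?case by (simp add: mons_0 multinom_def)
next
  case (Suc k)
  have "(\<Sum>j\<le>n. w j) ^ Suc k = (\<Sum>l\<le>n. w l * (\<Sum>b\<in>mons n k. multinom n k b * monomial_at n w b))"
    by (simp add: Suc.IH sum_distrib_right)
  also have "\<dots> = (\<Sum>l\<le>n. \<Sum>b\<in>mons n k. multinom n k b * monomial_at n w (raise_exp l b))"
    by (intro sum.cong) (auto simp: sum_distrib_left monomial_at_raise_exp intro!: sum.cong)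
  also have "\<dots> = (\<Sum>a\<in>mons n (Suc k). (\<Sum>l\<le>n. real (a l)) / real (Suc k) * multinom n (Suc k) a * monomial_at n w a)"
    by (simp add: sum_mons_raise_exp, subst sum.swap) (simp add: sum_distrib_right sum_divide_distrib)
  also have "\<dots> = (\<Sum>a\<in>mons n (Suc k). multinom n (Suc k) a * monomial_at n w a)"
    by (intro sum.cong) (auto simp: mons_def simp flip: of_nat_sum)
  finally show ?case ..
qed

section \<open>Directional derivatives of forms\<close>

lemma monomial_at_has_derivative:
  fixes x v :: "nat \<Rightarrow> real"
  shows "((\<lambda>s. monomial_at n (\<lambda>l. x l + s * v l) a) has_real_derivative
     (\<Sum>j\<le>n. real (a j) * (\<Prod>l\<le>n. x l ^ (if l = j then a l - 1 else a l)) * v j)) (at 0)"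
proof -
  have deriv: "((\<lambda>s. \<Prod>l\<le>n. (x l + s * v l) ^ a l) has_real_derivative
     (\<Sum>j\<le>n. (real (a j) * (x j + 0 * v j) ^ (a j - 1) * v j) * (\<Prod>l\<in>{..n}-{j}. (x l + 0 * v l) ^ a l))) (at 0)"
    by (rule has_field_derivative_prod) (auto intro!: derivative_eq_intros)
  have factor: "(\<Prod>l\<le>n. x l ^ (if l = j then a l - 1 else a l)) = x j ^ (a j - 1) * (\<Prod>l\<in>{..n}-{j}. x l ^ a l)"
    if "j \<le> n" for j
  proof -
    have "(\<Prod>l\<in>{..n}-{j}. x l ^ (if l = j then a l - 1 else a l)) = (\<Prod>l\<in>{..n}-{j}. x l ^ a l)"
      by (rule prod.cong) auto
    then show ?thesis using that by (simp add: prod.remove)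
  qed
  from deriv show ?thesis
    by (rule DERIV_cong) (auto intro!: sum.cong simp: factor)
qed

lemma peval_has_derivative:
  fixes x v :: "nat \<Rightarrow> real"
  shows "((\<lambda>s. peval n k p (\<lambda>j. x j + s * v j)) has_real_derivative (\<Sum>j\<le>n. pderiv_at n k p j x * v j)) (at 0)"
proof -
  have "((\<lambda>s. peval n k p (\<lambda>j. x j + s * v j)) has_real_derivative
     (\<Sum>a\<in>mons n k. p a * (\<Sum>j\<le>n. real (a j) * (\<Prod>l\<le>n. x l ^ (if l = j then a l - 1 else a l)) * v j))) (at 0)"
    unfolding peval_def by (intro DERIV_sum DERIV_cmult monomial_at_has_derivative)
  then show ?thesis
    by (rule DERIV_cong) (simp add: pderiv_at_def sum_distrib_left sum_distrib_right mult_ac sum.swap[of _ "mons n k"])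
qed

definition dot :: "nat \<Rightarrow> (nat \<Rightarrow> real) \<Rightarrow> (nat \<Rightarrow> real) \<Rightarrow> real" where
  "dot n u v = (\<Sum>l\<le>n. u l * v l)"

lemma dot_commute: "dot n u v = dot n v u"
  unfolding dot_def by (simp add: mult.commute)

lemma dot_diff_left: "dot n (\<lambda>l. f l - g l) w = dot n f w - dot n g w"
  unfolding dot_def by (simp add: algebra_simps sum_subtractf)

lemma dot_add_left: "dot n (\<lambda>l. f l + g l) w = dot n f w + dot n g w"
  unfolding dot_def by (simp add: algebra_simps sum.distrib)

lemma dot_scale_left: "dot n (\<lambda>l. c * f l) w = c * dot n f w"
  unfolding dot_def by (simp add: algebra_simps sum_distrib_left)

lemma dot_sum_left: "dot n (\<lambda>l. \<Sum>i\<in>J. z i * h i l) w = (\<Sum>i\<in>J. z i * dot n (h i) w)"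
  unfolding dot_def by (simp add: sum_distrib_right sum_distrib_left mult_ac sum.swap[of _ J])

lemma dot_line_left: "dot n (\<lambda>l. x l + s * v l) w = dot n x w + s * dot n v w"
  by (simp add: dot_add_left dot_scale_left)

lemma dot_self_nonneg: "dot n f f \<ge> 0"
  unfolding dot_def by (auto intro!: sum_nonneg)

lemma dot_self_eq_0: "dot n f f = 0 \<Longrightarrow> l \<le> n \<Longrightarrow> f l = 0"
  unfolding dot_def by (subst (asm) sum_nonneg_eq_0_iff) auto

lemma dot_sphere: "x \<in> sphere_n n \<Longrightarrow> dot n x x = 1"
  unfolding sphere_n_def dot_def by (simp add: power2_eq_square)

lemma tangent_iff_dot: "u \<in> tangent n x \<longleftrightarrow> (\<forall>i. n < i \<longrightarrow> u i = 0) \<and> dot n u x = 0"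
  unfolding tangent_def dot_def by simp

lemma sphere_n_nonempty: "(\<lambda>j. if j = 0 then 1 else 0) \<in> sphere_n n"
proof -
  have "(\<Sum>j\<le>n. ((if j = 0 then 1 else 0)::real)\<^sup>2) = (\<Sum>j\<le>n. if j = 0 then 1 else 0)"
    by (rule sum.cong) auto
  then show ?thesis unfolding sphere_n_def by simp
qed

section \<open>Reproducing kernels of the Weyl inner product\<close>

definition weyl_kernel :: "nat \<Rightarrow> nat \<Rightarrow> (nat \<Rightarrow> real) \<Rightarrow> (nat \<Rightarrow> nat) \<Rightarrow> real" where
  "weyl_kernel n k y a = (if a \<in> mons n k then multinom n k a * monomial_at n y a else 0)"

text \<open>The derivative of weyl_kernel n k x in x along u, divided by k: the form
  \<langle>x, X\<rangle>^{k-1} \<langle>u, X\<rangle>.\<close>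
definition weyl_dkernel :: "nat \<Rightarrow> nat \<Rightarrow> (nat \<Rightarrow> real) \<Rightarrow> (nat \<Rightarrow> real) \<Rightarrow> (nat \<Rightarrow> nat) \<Rightarrow> real" where
  "weyl_dkernel n k x u a = (if a \<in> mons n k then multinom n k a / real k *
     (\<Sum>l\<le>n. real (a l) * (\<Prod>l'\<le>n. x l' ^ (if l' = l then a l' - 1 else a l')) * u l) else 0)"

lemma peval_weyl_kernel: "peval n k (weyl_kernel n k y) z = dot n z y ^ k"
proof -
  have "peval n k (weyl_kernel n k y) z = (\<Sum>a\<in>mons n k. multinom n k a * monomial_at n (\<lambda>j. z j * y j) a)"
    unfolding peval_def weyl_kernel_def by (intro sum.cong) (simp_all add: power_mult_distrib prod.distrib mult_ac)
  then show ?thesis by (simp add: multinomial_theorem dot_def)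
qed

lemma peval_weyl_dkernel:
  assumes "1 \<le> k"
  shows "peval n k (weyl_dkernel n k x u) z = dot n z x ^ (k - 1) * dot n z u"
proof -
  have line: "peval n k (weyl_kernel n k z) (\<lambda>j. x j + s * u j) = (dot n x z + s * dot n u z) ^ k" for s
    by (simp add: peval_weyl_kernel dot_line_left)
  have "(\<Sum>j\<le>n. pderiv_at n k (weyl_kernel n k z) j x * u j) = real k * dot n x z ^ (k - 1) * dot n u z"
    using peval_has_derivative[of n k "weyl_kernel n k z" x u]
    unfolding line by (rule DERIV_unique) (auto intro!: derivative_eq_intros)
  moreover have "peval n k (weyl_dkernel n k x u) z = (\<Sum>j\<le>n. pderiv_at n k (weyl_kernel n k z) j x * u j) / real k"
    unfolding peval_def weyl_dkernel_def pderiv_at_def weyl_kernel_def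
    by (simp add: sum_divide_distrib sum_distrib_left sum_distrib_right mult_ac sum.swap[of _ "mons n k"])
  ultimately show ?thesis
    using assms by (simp add: dot_commute)
qed

definition weyl_form_inner :: "nat \<Rightarrow> nat \<Rightarrow> ((nat \<Rightarrow> nat) \<Rightarrow> real) \<Rightarrow> ((nat \<Rightarrow> nat) \<Rightarrow> real) \<Rightarrow> real" where
  "weyl_form_inner n k p r = (\<Sum>a\<in>mons n k. p a * r a / multinom n k a)"

lemma weyl_inner_eq_sum: "weyl_inner n d I P Q = (\<Sum>i\<in>I. weyl_form_inner n (d i) (P i) (Q i))"
  unfolding weyl_inner_def weyl_form_inner_def ..

lemma weyl_form_inner_commute: "weyl_form_inner n k p r = weyl_form_inner n k r p"
  unfolding weyl_form_inner_def by (simp add: mult.commute)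

lemma weyl_form_inner_self_nonneg: "weyl_form_inner n k p p \<ge> 0"
  unfolding weyl_form_inner_def by (auto intro!: sum_nonneg divide_nonneg_pos multinom_pos)

lemma weyl_form_inner_lincomb:
  "weyl_form_inner n k (\<lambda>a. c1 * f a + c2 * g a) (\<lambda>a. c1 * f a + c2 * g a)
   = c1\<^sup>2 * weyl_form_inner n k f f + 2 * c1 * c2 * weyl_form_inner n k f g + c2\<^sup>2 * weyl_form_inner n k g g"
  unfolding weyl_form_inner_def
  by (simp add: sum_distrib_left sum.distrib[symmetric] power2_eq_square algebra_simps add_divide_distrib)

lemma weyl_form_inner_kernel: "weyl_form_inner n k p (weyl_kernel n k y) = peval n k p y"
  unfolding weyl_form_inner_def peval_def weyl_kernel_def
  by (rule sum.cong) (auto simp: multinom_pos[THEN less_imp_neq, symmetric])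

lemma weyl_form_inner_dkernel:
  "weyl_form_inner n k p (weyl_dkernel n k x u) = (\<Sum>j\<le>n. pderiv_at n k p j x * u j) / real k"
proof -
  have "weyl_form_inner n k p (weyl_dkernel n k x u) = (\<Sum>a\<in>mons n k. p a / real k *
     (\<Sum>l\<le>n. real (a l) * (\<Prod>l'\<le>n. x l' ^ (if l' = l then a l' - 1 else a l')) * u l))"
    unfolding weyl_form_inner_def weyl_dkernel_def
    by (rule sum.cong) (auto simp: multinom_pos[THEN less_imp_neq, symmetric])
  then show ?thesis
    unfolding pderiv_at_def
    by (simp add: sum_divide_distrib sum_distrib_left sum_distrib_right mult_ac sum.swap[of _ "mons n k"])
qed

lemma peval_weyl_kernel_self: "x \<in> sphere_n n \<Longrightarrow> peval n k (weyl_kernel n k x) x = 1"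
  by (simp add: peval_weyl_kernel dot_sphere)

lemma peval_weyl_dkernel_self:
  "1 \<le> k \<Longrightarrow> u \<in> tangent n x \<Longrightarrow> peval n k (weyl_dkernel n k x u) x = 0"
  by (simp add: peval_weyl_dkernel dot_commute[of n x u] tangent_iff_dot)

text \<open>Both derivatives along T_x come from differentiating the restriction to the line x + s v,
  on which the kernels are constant resp. linear in s.\<close>
lemma pderiv_weyl_kernel_self:
  assumes "x \<in> sphere_n n" "v \<in> tangent n x"
  shows "(\<Sum>j\<le>n. pderiv_at n k (weyl_kernel n k x) j x * v j) = 0"
proof -
  have line: "peval n k (weyl_kernel n k x) (\<lambda>j. x j + s * v j) = 1" for s
    using assms by (simp add: peval_weyl_kernel dot_line_left dot_sphere tangent_iff_dot)
  show ?thesis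
    using peval_has_derivative[of n k "weyl_kernel n k x" x v]
    unfolding line by (rule DERIV_unique) (rule DERIV_const)
qed

lemma pderiv_weyl_dkernel_self:
  assumes "1 \<le> k" "x \<in> sphere_n n" "u \<in> tangent n x" "v \<in> tangent n x"
  shows "(\<Sum>j\<le>n. pderiv_at n k (weyl_dkernel n k x u) j x * v j) = dot n v u"
proof -
  have line: "peval n k (weyl_dkernel n k x u) (\<lambda>j. x j + s * v j) = s * dot n v u" for s
    using assms by (simp add: peval_weyl_dkernel dot_line_left dot_sphere tangent_iff_dot dot_commute[of n x u])
  show ?thesis
    using peval_has_derivative[of n k "weyl_dkernel n k x u" x v]
    unfolding line by (rule DERIV_unique) (auto intro!: derivative_eq_intros)
qed

lemma weyl_form_inner_kernel_kernel:
  "x \<in> sphere_n n \<Longrightarrow> weyl_form_inner n k (weyl_kernel n k x) (weyl_kernel n k x) = 1"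
  by (simp add: weyl_form_inner_kernel peval_weyl_kernel_self)

lemma weyl_form_inner_kernel_dkernel:
  "1 \<le> k \<Longrightarrow> u \<in> tangent n x \<Longrightarrow> weyl_form_inner n k (weyl_kernel n k x) (weyl_dkernel n k x u) = 0"
  by (simp add: weyl_form_inner_commute[of n k "weyl_kernel n k x"] weyl_form_inner_kernel peval_weyl_dkernel_self)

lemma weyl_form_inner_dkernel_dkernel:
  "1 \<le> k \<Longrightarrow> x \<in> sphere_n n \<Longrightarrow> u \<in> tangent n x \<Longrightarrow>
   weyl_form_inner n k (weyl_dkernel n k x u) (weyl_dkernel n k x u) = dot n u u / real k"
  by (simp add: weyl_form_inner_dkernel pderiv_weyl_dkernel_self)

section \<open>The Moore--Penrose inverse of DF(x) on T_x\<close>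

lemma orthogonal_projection_exists:
  fixes h :: "'b \<Rightarrow> nat \<Rightarrow> real"
  assumes "finite J"
  shows "\<exists>z. \<forall>j\<in>J. dot n (\<lambda>l. u l - (\<Sum>i\<in>J. z i * h i l)) (h j) = 0"
  using assms
proof (induction J arbitrary: u rule: finite_induct)
  case empty
  then show ?case by simp
next
  case (insert b J)
  obtain zu where zu: "\<forall>j\<in>J. dot n (\<lambda>l. u l - (\<Sum>i\<in>J. zu i * h i l)) (h j) = 0"
    using insert.IH by blast
  obtain zb where zb: "\<forall>j\<in>J. dot n (\<lambda>l. h b l - (\<Sum>i\<in>J. zb i * h i l)) (h j) = 0"
    using insert.IH by blast
  define r where "r = (\<lambda>l. u l - (\<Sum>i\<in>J. zu i * h i l))"
  define h' where "h' = (\<lambda>l. h b l - (\<Sum>i\<in>J. zb i * h i l))"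
  have dot_hb: "dot n f (h b) = dot n f h' + (\<Sum>i\<in>J. zb i * dot n f (h i))" for f
  proof -
    have "h b = (\<lambda>l. h' l + (\<Sum>i\<in>J. zb i * h i l))" by (simp add: h'_def)
    then have "dot n (h b) f = dot n h' f + (\<Sum>i\<in>J. zb i * dot n (h i) f)"
      by (simp add: dot_add_left dot_sum_left)
    then show ?thesis by (simp add: dot_commute)
  qed
  \<comment> \<open>subtract from r its component along h', the part of h b orthogonal to the h j, j \<in> J\<close>
  define c where "c = (if dot n h' h' = 0 then 0 else dot n r h' / dot n h' h')"
  define z where "z = (\<lambda>i. if i = b then c else zu i - c * zb i)"
  have res: "(\<lambda>l. u l - (\<Sum>i\<in>insert b J. z i * h i l)) = (\<lambda>l. r l - c * h' l)"
  proof
    fix l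
    have "(\<Sum>i\<in>J. z i * h i l) = (\<Sum>i\<in>J. (zu i - c * zb i) * h i l)"
      by (rule sum.cong) (use insert.hyps in \<open>auto simp: z_def\<close>)
    also have "\<dots> = (\<Sum>i\<in>J. zu i * h i l) - c * (\<Sum>i\<in>J. zb i * h i l)"
      by (simp add: algebra_simps sum_subtractf sum_distrib_left)
    finally show "u l - (\<Sum>i\<in>insert b J. z i * h i l) = r l - c * h' l"
      using insert.hyps by (simp add: z_def r_def h'_def algebra_simps)
  qed
  have orth_J: "\<forall>j\<in>J. dot n (\<lambda>l. r l - c * h' l) (h j) = 0"
    using zu zb by (simp add: r_def h'_def dot_diff_left dot_scale_left)
  have "dot n (\<lambda>l. r l - c * h' l) h' = dot n r h' - c * dot n h' h'"
    by (simp add: dot_diff_left dot_scale_left)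
  moreover have "dot n r h' = 0" if "dot n h' h' = 0"
    using dot_self_eq_0[OF that] by (simp add: dot_def)
  ultimately have "dot n (\<lambda>l. r l - c * h' l) h' = 0"
    by (simp add: c_def)
  then have "dot n (\<lambda>l. r l - c * h' l) (h b) = 0"
    using orth_J by (simp add: dot_hb)
  then show ?case
    using orth_J res by (intro exI[of _ z]) auto
qed

lemma DF_eq_dot: "DF n d P x v i = dot n (\<lambda>j. pderiv_at n (d i) (P i) j x) v"
  unfolding DF_def dot_def ..

lemma DF_diff: "DF n d P x (\<lambda>l. u l - v l) i = DF n d P x u i - DF n d P x v i"
  unfolding DF_def by (simp add: algebra_simps sum_subtractf)

lemma DF_scale: "DF n d P x (\<lambda>l. c * u l) i = c * DF n d P x u i"
  unfolding DF_def by (simp add: algebra_simps sum_distrib_left)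

lemma pderiv_at_outside: "n < j \<Longrightarrow> pderiv_at n k p j x = 0"
  unfolding pderiv_at_def by (auto intro!: sum.neutral simp: mons_outside)

abbreviation is_pinv :: "nat \<Rightarrow> (nat \<Rightarrow> nat) \<Rightarrow> nat set \<Rightarrow> (nat \<Rightarrow> (nat \<Rightarrow> nat) \<Rightarrow> real)
    \<Rightarrow> (nat \<Rightarrow> real) \<Rightarrow> (nat \<Rightarrow> real) \<Rightarrow> (nat \<Rightarrow> real) \<Rightarrow> bool" where
  "is_pinv n d I P x w u \<equiv> u \<in> tangent n x \<and> (\<forall>i\<in>I. DF n d P x u i = w i) \<and>
      (\<forall>v\<in>tangent n x. (\<forall>i\<in>I. DF n d P x v i = 0) \<longrightarrow> (\<Sum>j\<le>n. u j * v j) = 0)"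

text \<open>The orthogonal projection of any preimage onto the span of x and the gradients.\<close>
lemma is_pinv_exists:
  assumes surj: "surj_on_T n d I P x" and fin: "finite I" and x: "x \<in> sphere_n n"
  shows "\<exists>u. is_pinv n d I P x w u"
proof -
  obtain u0 where u0: "u0 \<in> tangent n x" "\<forall>i\<in>I. DF n d P x u0 i = w i"
    using surj unfolding surj_on_T_def by blast
  define h where "h = (\<lambda>j. case j of None \<Rightarrow> x | Some i \<Rightarrow> (\<lambda>l. pderiv_at n (d i) (P i) l x))"
  define J where "J = insert None (Some ` I)"
  have "finite J" using fin by (simp add: J_def)
  then obtain z where z: "\<forall>j\<in>J. dot n (\<lambda>l. u0 l - (\<Sum>i\<in>J. z i * h i l)) (h j) = 0"
    using orthogonal_projection_exists by blast
  define u where "u = (\<lambda>l. \<Sum>i\<in>J. z i * h i l)"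
  have h_outside: "n < l \<Longrightarrow> h j l = 0" for j l
    using x pderiv_at_outside by (cases j) (auto simp: h_def sphere_n_def)
  have dot_u: "dot n (h j) u = dot n (h j) u0" if "j \<in> J" for j
    using z that dot_diff_left[of n u0 u "h j"] unfolding u_def by (simp add: dot_commute)
  have "u \<in> tangent n x"
    using dot_u[of None] u0(1) h_outside by (simp add: J_def h_def tangent_iff_dot u_def dot_commute)
  moreover have "\<forall>i\<in>I. DF n d P x u i = w i"
  proof
    fix i assume "i \<in> I"
    then show "DF n d P x u i = w i"
      using dot_u[of "Some i"] u0(2) by (simp add: DF_eq_dot J_def h_def dot_commute)
  qed
  moreover have "(\<Sum>j\<le>n. u j * v j) = 0" if v: "v \<in> tangent n x" "\<forall>i\<in>I. DF n d P x v i = 0" for v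
  proof -
    have "\<forall>j\<in>J. dot n (h j) v = 0"
      using v by (auto simp: J_def h_def DF_eq_dot tangent_iff_dot dot_commute)
    then have "dot n u v = 0" unfolding u_def dot_sum_left by simp
    then show ?thesis by (simp add: dot_def)
  qed
  ultimately show ?thesis by blast
qed

lemma is_pinv_unique:
  assumes "is_pinv n d I P x w u1" "is_pinv n d I P x w u2"
  shows "u1 = u2"
proof -
  define e where "e = (\<lambda>l. u1 l - u2 l)"
  have e: "e \<in> tangent n x" "\<forall>i\<in>I. DF n d P x e i = 0"
    using assms by (auto simp: tangent_iff_dot e_def dot_diff_left DF_diff)
  then have "dot n u1 e = 0" "dot n u2 e = 0"
    using assms by (auto simp: dot_def)
  then have "dot n e e = 0" by (simp add: e_def dot_diff_left)
  then have "e l = 0" for l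
    using dot_self_eq_0[of n e l] e(1) by (cases "l \<le> n") (auto simp: tangent_iff_dot)
  then show ?thesis by (auto simp: e_def fun_eq_iff)
qed

lemma pinv_spec:
  assumes "surj_on_T n d I P x" "finite I" "x \<in> sphere_n n"
  shows "is_pinv n d I P x w (pinv n d I P x w)"
proof -
  obtain u where u: "is_pinv n d I P x w u"
    using is_pinv_exists[OF assms] by blast
  have "pinv n d I P x w = u"
    unfolding pinv_def
  proof (rule the_equality)
    show "v = u" if "is_pinv n d I P x w v" for v
      using that u by (rule is_pinv_unique)
  qed (fact u)
  with u show ?thesis by simp
qed

section \<open>Distance to \<Sigma>_* via rank-one perturbations\<close>

lemma weyl_norm_nonneg: "weyl_norm n d I P \<ge> 0"
  unfolding weyl_norm_def weyl_inner_eq_sum by (auto intro!: sum_nonneg weyl_form_inner_self_nonneg)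

lemma weyl_norm_mono:
  assumes "I \<subseteq> J" "finite J"
  shows "weyl_norm n d I P \<le> weyl_norm n d J P"
  unfolding weyl_norm_def weyl_inner_eq_sum
  by (intro real_sqrt_le_mono sum_mono2) (use assms weyl_form_inner_self_nonneg in auto)

lemma weyl_norm_pos:
  assumes "P \<in> Hd n d N" "P \<noteq> (\<lambda>i a. 0)"
  shows "weyl_norm n d {..<N} P > 0"
proof -
  obtain i a where ia: "P i a \<noteq> 0"
    using assms(2) by (auto simp: fun_eq_iff)
  have i: "i < N"
  proof (rule ccontr)
    assume "\<not> i < N"
    then show False using assms(1) ia unfolding Hd_def by auto
  qed
  have a: "a \<in> mons n (d i)"
    using assms(1) ia unfolding Hd_def by blast
  have "0 < P i a * P i a"
    using ia not_real_square_gt_zero by blast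
  then have "0 < P i a * P i a / multinom n (d i) a"
    using multinom_pos by (rule divide_pos_pos)
  also have "\<dots> \<le> weyl_form_inner n (d i) (P i) (P i)"
    unfolding weyl_form_inner_def
    by (rule member_le_sum[OF a]) (auto intro!: divide_nonneg_pos multinom_pos simp: finite_mons)
  also have "\<dots> \<le> weyl_inner n d {..<N} P P"
    unfolding weyl_inner_eq_sum by (rule member_le_sum) (use i weyl_form_inner_self_nonneg in auto)
  finally show ?thesis by (simp add: weyl_norm_def)
qed

lemma kappa_at_eq_infinity:
  assumes "\<forall>i\<in>I. peval n (d i) (P i) x = 0" "\<not> surj_on_T n d I P x"
  shows "kappa_at n d I P x = \<infinity>"
  using assms unfolding kappa_at_def mu_proj_def Let_def by simp

lemma Sigma_star_if_kappa_at_infinity: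
  assumes "P \<in> Hd n d (q + s)" "L \<subseteq> {q..<q+s}" "q + card L \<le> n + 1" "x \<in> sphere_n n"
    "kappa_at n d ({..<q} \<union> L) P x = \<infinity>"
  shows "P \<in> Sigma_star n d q s"
proof -
  have "kappa_at n d ({..<q} \<union> L) P x \<le> kappa n d ({..<q} \<union> L) P"
    unfolding kappa_def using assms(4) by (rule SUP_upper)
  also have "\<dots> \<le> kappa_star n d q s P"
    unfolding kappa_star_def using assms(2,3) by (intro SUP_upper) auto
  finally show ?thesis
    using assms(1,5) by (simp add: Sigma_star_def)
qed

lemma zero_in_Sigma_star:
  assumes "q \<le> n + 1"
  shows "(\<lambda>i a. 0) \<in> Sigma_star n d q s"
proof (rule Sigma_star_if_kappa_at_infinity[where L="{}"])
  show "kappa_at n d ({..<q} \<union> {}) (\<lambda>i a. 0) (\<lambda>j. if j = 0 then 1 else 0) = \<infinity>"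
    by (simp add: kappa_at_def weyl_norm_def weyl_inner_def)
qed (use assms sphere_n_nonempty in \<open>auto simp: Hd_def\<close>)

lemma dist_Sigma_star_nonneg:
  assumes "q \<le> n + 1"
  shows "0 \<le> dist_Sigma_star n d q s P"
  unfolding dist_Sigma_star_def
  by (rule cInf_greatest) (use zero_in_Sigma_star[OF assms, of d s] weyl_norm_nonneg in auto)

lemma dist_Sigma_star_le:
  assumes "G \<in> Sigma_star n d q s"
  shows "dist_Sigma_star n d q s P \<le> weyl_norm n d {..<q+s} (\<lambda>i a. P i a - G i a)"
  unfolding dist_Sigma_star_def
  by (rule cInf_lower) (use assms weyl_norm_nonneg in \<open>auto intro!: bdd_belowI[of _ 0]\<close>)

text \<open>Subtracting F_i(x) K_x kills the value at x; subtracting c_i J_{x,u} changes DF(x) on T_x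
  by the rank-one map v \<mapsto> c \<langle>v, u\<rangle>.\<close>
definition perturb :: "nat \<Rightarrow> (nat \<Rightarrow> nat) \<Rightarrow> nat set \<Rightarrow> (nat \<Rightarrow> (nat \<Rightarrow> nat) \<Rightarrow> real)
    \<Rightarrow> (nat \<Rightarrow> real) \<Rightarrow> (nat \<Rightarrow> real) \<Rightarrow> (nat \<Rightarrow> real) \<Rightarrow> nat \<Rightarrow> (nat \<Rightarrow> nat) \<Rightarrow> real" where
  "perturb n d I P x c u = (\<lambda>i a. if i \<in> I then P i a -
      (peval n (d i) (P i) x * weyl_kernel n (d i) x a + c i * weyl_dkernel n (d i) x u a) else P i a)"

lemma perturb_in_Hd:
  assumes "P \<in> Hd n d N" "I \<subseteq> {..<N}"
  shows "perturb n d I P x c u \<in> Hd n d N"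
  using assms unfolding Hd_def perturb_def weyl_kernel_def weyl_dkernel_def by auto

lemma peval_perturb:
  assumes "i \<in> I" "1 \<le> d i" "x \<in> sphere_n n" "u \<in> tangent n x"
  shows "peval n (d i) (perturb n d I P x c u i) x = 0"
proof -
  have "peval n (d i) (perturb n d I P x c u i) x = peval n (d i) (P i) x
      - peval n (d i) (P i) x * peval n (d i) (weyl_kernel n (d i) x) x
      - c i * peval n (d i) (weyl_dkernel n (d i) x u) x"
    using assms(1) unfolding peval_def perturb_def
    by (simp add: algebra_simps sum_subtractf sum.distrib sum_distrib_left)
  then show ?thesis
    using assms by (simp add: peval_weyl_kernel_self peval_weyl_dkernel_self)
qed

lemma DF_perturb:
  assumes "i \<in> I" "1 \<le> d i" "x \<in> sphere_n n" "u \<in> tangent n x" "v \<in> tangent n x"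
  shows "DF n d (perturb n d I P x c u) x v i = DF n d P x v i - c i * dot n v u"
proof -
  have "DF n d (perturb n d I P x c u) x v i = DF n d P x v i
      - peval n (d i) (P i) x * (\<Sum>j\<le>n. pderiv_at n (d i) (weyl_kernel n (d i) x) j x * v j)
      - c i * (\<Sum>j\<le>n. pderiv_at n (d i) (weyl_dkernel n (d i) x u) j x * v j)"
    using assms(1) unfolding DF_def pderiv_at_def perturb_def
    by (simp add: algebra_simps sum_subtractf sum.distrib sum_distrib_left)
  then show ?thesis
    using assms by (simp add: pderiv_weyl_kernel_self pderiv_weyl_dkernel_self)
qed

text \<open>K_x and J_{x,u} are orthogonal, with squared norms 1 and |u|^2 / d_i.\<close>
lemma weyl_norm_perturb:
  assumes "I \<subseteq> {..<N}" "\<forall>i\<in>I. 1 \<le> d i" "x \<in> sphere_n n" "u \<in> tangent n x"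
  shows "weyl_norm n d {..<N} (\<lambda>i a. P i a - perturb n d I P x c u i a)
       = sqrt (\<Sum>i\<in>I. (peval n (d i) (P i) x)\<^sup>2 + (c i)\<^sup>2 * dot n u u / real (d i))"
proof -
  define D where "D = (\<lambda>i a. P i a - perturb n d I P x c u i a)"
  have "weyl_inner n d {..<N} D D = (\<Sum>i\<in>I. weyl_form_inner n (d i) (D i) (D i))"
    unfolding weyl_inner_eq_sum
    by (rule sum.mono_neutral_right) (use assms(1) in \<open>auto simp: D_def perturb_def weyl_form_inner_def\<close>)
  also have "\<dots> = (\<Sum>i\<in>I. (peval n (d i) (P i) x)\<^sup>2 + (c i)\<^sup>2 * dot n u u / real (d i))"
  proof (rule sum.cong)
    fix i assume i: "i \<in> I"
    then have "D i = (\<lambda>a. peval n (d i) (P i) x * weyl_kernel n (d i) x a + c i * weyl_dkernel n (d i) x u a)"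
      by (simp add: D_def perturb_def fun_eq_iff)
    then show "weyl_form_inner n (d i) (D i) (D i) = (peval n (d i) (P i) x)\<^sup>2 + (c i)\<^sup>2 * dot n u u / real (d i)"
      using assms(2-4) i
      by (simp add: weyl_form_inner_lincomb weyl_form_inner_kernel_kernel
          weyl_form_inner_kernel_dkernel weyl_form_inner_dkernel_dkernel)
  qed simp
  finally show ?thesis
    by (simp add: weyl_norm_def D_def)
qed

lemma dist_Sigma_star_le_perturb:
  assumes "P \<in> Hd n d (q + s)" "\<forall>i<q+s. 1 \<le> d i" "L \<subseteq> {q..<q+s}" "q + card L \<le> n + 1"
    "x \<in> sphere_n n" "u \<in> tangent n x"
    "\<not> surj_on_T n d ({..<q} \<union> L) (perturb n d ({..<q} \<union> L) P x c u) x"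
  shows "dist_Sigma_star n d q s P
       \<le> sqrt (\<Sum>i\<in>{..<q} \<union> L. (peval n (d i) (P i) x)\<^sup>2 + (c i)\<^sup>2 * dot n u u / real (d i))"
proof -
  let ?I = "{..<q} \<union> L" and ?G = "perturb n d ({..<q} \<union> L) P x c u"
  have I: "?I \<subseteq> {..<q+s}" "\<forall>i\<in>?I. 1 \<le> d i"
    using assms(2,3) by auto
  have "kappa_at n d ?I ?G x = \<infinity>"
    using I assms(5-7) by (intro kappa_at_eq_infinity) (simp_all add: peval_perturb)
  then have "?G \<in> Sigma_star n d q s"
    using assms(1,3-5) perturb_in_Hd[OF assms(1) I(1)] by (intro Sigma_star_if_kappa_at_infinity) auto
  then show ?thesis
    using dist_Sigma_star_le weyl_norm_perturb[OF I assms(5,6)] by metis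
qed

text \<open>With u = (DF(x)|T_x)^\<dagger> W and c = W / |u|^2, the rank-one correction cancels DF(x) along u:
  a preimage v of W would make v - t u a kernel vector not orthogonal to u.\<close>
lemma perturb_not_surj:
  assumes u: "is_pinv n d I P x W u" and m: "dot n u u > 0"
    and degrees: "\<forall>i\<in>I. 1 \<le> d i" and x: "x \<in> sphere_n n"
  shows "\<not> surj_on_T n d I (perturb n d I P x (\<lambda>i. W i / dot n u u) u) x"
proof
  let ?m = "dot n u u"
  assume "surj_on_T n d I (perturb n d I P x (\<lambda>i. W i / ?m) u) x"
  then obtain v where v: "v \<in> tangent n x"
    and vW: "\<forall>i\<in>I. DF n d (perturb n d I P x (\<lambda>i. W i / ?m) u) x v i = W i"
    unfolding surj_on_T_def by blast
  define t where "t = 1 + dot n v u / ?m"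
  define k where "k = (\<lambda>l. v l - t * u l)"
  have "DF n d P x v i = t * W i" if i: "i \<in> I" for i
  proof -
    have "W i = DF n d P x v i - W i / ?m * dot n v u"
      using vW i DF_perturb[OF i _ x _ v, where c="\<lambda>i. W i / dot n u u"] degrees u by auto
    then show ?thesis
      using m by (simp add: t_def field_simps)
  qed
  then have "\<forall>i\<in>I. DF n d P x k i = 0"
    using u by (simp add: k_def DF_diff DF_scale)
  moreover have "k \<in> tangent n x"
    using u v by (simp add: k_def tangent_iff_dot dot_diff_left dot_scale_left)
  ultimately have "dot n k u = 0"
    using u by (simp add: dot_def mult.commute)
  moreover have "dot n k u = dot n v u - t * ?m"
    by (simp add: k_def dot_diff_left dot_scale_left)
  ultimately show False
    using m by (simp add: t_def field_simps)
qed

lemma kappa_at_not_surj: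
  assumes "weyl_norm n d I P > 0" "\<not> surj_on_T n d I P x" "(\<Sum>i\<in>I. (peval n (d i) (P i) x)\<^sup>2) > 0"
  shows "kappa_at n d I P x = ereal (weyl_norm n d I P / sqrt (\<Sum>i\<in>I. (peval n (d i) (P i) x)\<^sup>2))"
  using assms unfolding kappa_at_def mu_proj_def Let_def by (simp add: real_sqrt_divide)

lemma kappa_at_surj:
  assumes "weyl_norm n d I P > 0" "surj_on_T n d I P x" "pinv_Delta_norm n d I P x \<noteq> 0"
  shows "kappa_at n d I P x = ereal (weyl_norm n d I P /
     sqrt (1 / (pinv_Delta_norm n d I P x)\<^sup>2 + (\<Sum>i\<in>I. (peval n (d i) (P i) x)\<^sup>2)))"
proof -
  define N where "N = weyl_norm n d I P"
  define M where "M = pinv_Delta_norm n d I P x"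
  define S where "S = (\<Sum>i\<in>I. (peval n (d i) (P i) x)\<^sup>2)"
  have "S \<ge> 0" by (simp add: S_def sum_nonneg)
  then have pos: "1 / (N * M)\<^sup>2 + S / N\<^sup>2 > 0" and eq: "1 / (N * M)\<^sup>2 + S / N\<^sup>2 = (1 / M\<^sup>2 + S) / N\<^sup>2"
    using assms(1,3) by (simp_all add: N_def M_def add_pos_nonneg field_simps power_mult_distrib)
  have "kappa_at n d I P x = ereal (1 / sqrt (1 / (N * M)\<^sup>2 + S / N\<^sup>2))"
    using assms pos unfolding kappa_at_def mu_proj_def Let_def
    by (simp add: N_def[symmetric] M_def[symmetric] S_def[symmetric])
  then show ?thesis
    using assms(1) by (simp add: eq real_sqrt_divide N_def[symmetric] M_def[symmetric] S_def[symmetric])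
qed

lemma kappa_at_surj_degenerate:
  assumes "weyl_norm n d I P > 0" "surj_on_T n d I P x" "pinv_Delta_norm n d I P x = 0"
  shows "kappa_at n d I P x = 0"
  using assms unfolding kappa_at_def mu_proj_def Let_def by (simp add: zero_ereal_def)

context
  fixes n q s :: nat and d :: "nat \<Rightarrow> nat" and P :: "nat \<Rightarrow> (nat \<Rightarrow> nat) \<Rightarrow> real"
    and L :: "nat set" and x :: "nat \<Rightarrow> real"
    and I :: "nat set" and S \<delta> :: real
  assumes q: "q \<le> n + 1" and degrees: "\<forall>i<q+s. 1 \<le> d i" and P: "P \<in> Hd n d (q + s)"
    and L: "L \<subseteq> {q..<q+s}" "q + card L \<le> n + 1" and x: "x \<in> sphere_n n"
  defines "I \<equiv> {..<q} \<union> L"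
    and "S \<equiv> \<Sum>i\<in>I. (peval n (d i) (P i) x)\<^sup>2"
    and "\<delta> \<equiv> dist_Sigma_star n d q s P"
begin

lemma subsystem_bounds: "finite I" "\<forall>i\<in>I. 1 \<le> d i" "S \<ge> 0" "\<delta> \<ge> 0"
  using L degrees dist_Sigma_star_nonneg[OF q]
  by (auto simp: I_def S_def \<delta>_def intro!: sum_nonneg intro: finite_subset)

lemma dist_le_perturb:
  assumes "u \<in> tangent n x" "\<not> surj_on_T n d I (perturb n d I P x c u) x"
  shows "\<delta> \<le> sqrt (S + (\<Sum>i\<in>I. (c i)\<^sup>2 * dot n u u / real (d i)))"
  using dist_Sigma_star_le_perturb[OF P degrees L x assms[unfolded I_def]]
  by (simp add: I_def S_def \<delta>_def sum.distrib)

lemma weyl_norm_subsystem_pos: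
  assumes "\<delta> > 0"
  shows "weyl_norm n d I P > 0"
proof (rule ccontr)
  assume "\<not> weyl_norm n d I P > 0"
  then have "kappa_at n d I P x = \<infinity>"
    using weyl_norm_nonneg[of n d I P] by (simp add: kappa_at_def)
  then have "P \<in> Sigma_star n d q s"
    using Sigma_star_if_kappa_at_infinity[OF P L x] by (simp add: I_def)
  then have "\<delta> \<le> 0"
    using dist_Sigma_star_le[of P n d q s P] by (simp add: \<delta>_def weyl_norm_def weyl_inner_def)
  with assms show False by simp
qed

lemma dist_le_not_surj:
  assumes "\<not> surj_on_T n d I P x"
  shows "\<delta> \<le> sqrt S"
proof -
  have zero: "(\<lambda>_. 0) \<in> tangent n x" by (simp add: tangent_def)
  have "DF n d (perturb n d I P x (\<lambda>_. 0) (\<lambda>_. 0)) x v i = DF n d P x v i"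
    if "i \<in> I" "v \<in> tangent n x" for i v
    using DF_perturb[OF that(1) _ x zero that(2)] subsystem_bounds that by simp
  then have "\<not> surj_on_T n d I (perturb n d I P x (\<lambda>_. 0) (\<lambda>_. 0)) x"
    using assms unfolding surj_on_T_def by metis
  then show ?thesis
    using dist_le_perturb[OF zero] by (simp add: dot_def)
qed

lemma dist_sq_le_pinv:
  assumes surj: "surj_on_T n d I P x" and w: "(\<Sum>i\<in>I. (w i)\<^sup>2) \<le> 1"
    and u_def: "u = pinv n d I P x (\<lambda>i. sqrt (real (d i)) * w i)" and m: "dot n u u > 0"
  shows "\<delta>\<^sup>2 \<le> S + 1 / dot n u u"
proof -
  define W where "W = (\<lambda>i. sqrt (real (d i)) * w i)"
  define c where "c = (\<lambda>i. W i / dot n u u)"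
  have u: "is_pinv n d I P x W u"
    unfolding u_def W_def using pinv_spec surj subsystem_bounds x by blast
  have "(c i)\<^sup>2 * dot n u u / real (d i) = (w i)\<^sup>2 / dot n u u" if "i \<in> I" for i
  proof -
    have "d i \<ge> 1" using subsystem_bounds(2) that by blast
    then show ?thesis
      using m by (simp add: c_def W_def power_divide power_mult_distrib field_simps power2_eq_square)
  qed
  then have "(\<Sum>i\<in>I. (c i)\<^sup>2 * dot n u u / real (d i)) \<le> 1 / dot n u u"
    using w m by (simp add: sum_divide_distrib[symmetric] divide_right_mono)
  moreover have "\<delta> \<le> sqrt (S + (\<Sum>i\<in>I. (c i)\<^sup>2 * dot n u u / real (d i)))"
    using dist_le_perturb perturb_not_surj[OF u m] u subsystem_bounds x by (simp add: c_def)
  ultimately have "\<delta> \<le> sqrt (S + 1 / dot n u u)"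
    by (meson add_left_mono order.trans real_sqrt_le_mono)
  then show ?thesis
    using subsystem_bounds(4) sqrt_ge_absD by simp
qed

lemma dist_sq_le_pinv_Delta_norm:
  assumes surj: "surj_on_T n d I P x" and M: "pinv_Delta_norm n d I P x \<noteq> 0"
  shows "\<delta>\<^sup>2 \<le> 1 / (pinv_Delta_norm n d I P x)\<^sup>2 + S"
proof (cases "\<delta>\<^sup>2 \<le> S")
  case True
  then show ?thesis by (simp add: add_increasing)
next
  case False
  define E where "E = {sqrt (\<Sum>j\<le>n. (pinv n d I P x (\<lambda>i. sqrt (real (d i)) * w i) j)\<^sup>2) | w. (\<Sum>i\<in>I. (w i)\<^sup>2) \<le> 1}"
  define B where "B = 1 / sqrt (\<delta>\<^sup>2 - S)"
  have gap: "\<delta>\<^sup>2 - S > 0" using False by simp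
  have E_bound: "e \<le> B" if e_E: "e \<in> E" for e
  proof -
    obtain w where w: "(\<Sum>i\<in>I. (w i)\<^sup>2) \<le> 1"
      and e: "e = sqrt (\<Sum>j\<le>n. (pinv n d I P x (\<lambda>i. sqrt (real (d i)) * w i) j)\<^sup>2)"
      using e_E unfolding E_def by blast
    define u where "u = pinv n d I P x (\<lambda>i. sqrt (real (d i)) * w i)"
    have e_u: "e = sqrt (dot n u u)" by (simp add: e u_def dot_def power2_eq_square)
    show ?thesis
    proof (cases "dot n u u = 0")
      case True
      then show ?thesis using e_u gap by (simp add: B_def)
    next
      case False
      then have m: "dot n u u > 0" using dot_self_nonneg[of n u] by simp
      then have "\<delta>\<^sup>2 \<le> S + 1 / dot n u u"
        using dist_sq_le_pinv[OF surj w u_def] by simp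
      then have "dot n u u \<le> 1 / (\<delta>\<^sup>2 - S)"
        using m gap by (simp add: field_simps)
      then have "sqrt (dot n u u) \<le> sqrt (1 / (\<delta>\<^sup>2 - S))"
        by (rule real_sqrt_le_mono)
      then show ?thesis
        using e_u by (simp add: B_def real_sqrt_divide)
    qed
  qed
  have E_nonneg: "0 \<le> e" if "e \<in> E" for e
    using that unfolding E_def by (auto intro!: sum_nonneg)
  have "E \<noteq> {}" unfolding E_def by (auto intro!: exI[of _ "\<lambda>_. 0"])
  then obtain e where "e \<in> E" by blast
  have "pinv_Delta_norm n d I P x = Sup E"
    unfolding pinv_Delta_norm_def E_def ..
  moreover have "0 \<le> Sup E"
    using E_nonneg[OF \<open>e \<in> E\<close>] cSup_upper[OF \<open>e \<in> E\<close>] E_bound by (meson bdd_aboveI order.trans)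
  moreover have "Sup E \<le> B"
    using \<open>E \<noteq> {}\<close> E_bound by (rule cSup_least)
  ultimately have "0 \<le> pinv_Delta_norm n d I P x" "pinv_Delta_norm n d I P x \<le> B"
    by simp_all
  then have "(pinv_Delta_norm n d I P x)\<^sup>2 \<le> 1 / (\<delta>\<^sup>2 - S)"
    using gap power_mono[of _ B 2] by (simp add: B_def power_divide)
  then show ?thesis
    using gap M by (simp add: field_simps)
qed

lemma kappa_at_le_norm_div_dist:
  assumes \<delta>: "\<delta> > 0"
  shows "kappa_at n d I P x \<le> ereal (weyl_norm n d I P / \<delta>)"
proof -
  define N where "N = weyl_norm n d I P"
  have N: "N > 0" using weyl_norm_subsystem_pos[OF \<delta>] by (simp add: N_def)
  consider "\<not> surj_on_T n d I P x" | "surj_on_T n d I P x" "pinv_Delta_norm n d I P x = 0"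
    | "surj_on_T n d I P x" "pinv_Delta_norm n d I P x \<noteq> 0"
    by blast
  then show ?thesis
  proof cases
    case 1
    then have "\<delta> \<le> sqrt S" by (rule dist_le_not_surj)
    with \<delta> have "sqrt S > 0" by linarith
    with \<open>\<delta> \<le> sqrt S\<close> \<delta> N have "N / sqrt S \<le> N / \<delta>" and "S > 0"
      by (auto intro!: divide_left_mono)
    then show ?thesis
      using kappa_at_not_surj 1 N by (simp add: N_def S_def)
  next
    case 2
    then show ?thesis
      using kappa_at_surj_degenerate N \<delta> by (simp add: N_def)
  next
    case 3
    then have "\<delta> \<le> sqrt (1 / (pinv_Delta_norm n d I P x)\<^sup>2 + S)"
      by (intro real_le_rsqrt dist_sq_le_pinv_Delta_norm)
    moreover from this \<delta> have "sqrt (1 / (pinv_Delta_norm n d I P x)\<^sup>2 + S) > 0"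
      by linarith
    ultimately have "N / sqrt (1 / (pinv_Delta_norm n d I P x)\<^sup>2 + S) \<le> N / \<delta>"
      using \<delta> N by (auto intro!: divide_left_mono)
    then show ?thesis
      using kappa_at_surj 3 N by (simp add: N_def S_def)
  qed
qed

end

lemma kappa_star_le_norm_div_dist:
  assumes "q \<le> n + 1" "\<forall>i<q+s. 1 \<le> d i" "P \<in> Hd n d (q + s)" "dist_Sigma_star n d q s P > 0"
  shows "kappa_star n d q s P \<le> ereal (weyl_norm n d {..<q+s} P / dist_Sigma_star n d q s P)"
  unfolding kappa_star_def kappa_def
proof (intro SUP_least, clarify)
  fix L x assume L: "L \<subseteq> {q..<q+s}" "q + card L \<le> n + 1" and x: "x \<in> sphere_n n"
  have "weyl_norm n d ({..<q} \<union> L) P \<le> weyl_norm n d {..<q+s} P"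
    using L by (auto intro!: weyl_norm_mono)
  with assms(4) have "weyl_norm n d ({..<q} \<union> L) P / dist_Sigma_star n d q s P
      \<le> weyl_norm n d {..<q+s} P / dist_Sigma_star n d q s P"
    by (simp add: divide_right_mono)
  then show "kappa_at n d ({..<q} \<union> L) P x \<le> ereal (weyl_norm n d {..<q+s} P / dist_Sigma_star n d q s P)"
    using kappa_at_le_norm_div_dist[OF assms(1-3) L x assms(4)] by (simp add: order_trans)
qed

theorem theorem4p10:
  fixes n q s :: nat and d :: "nat \<Rightarrow> nat" and P :: "nat \<Rightarrow> (nat \<Rightarrow> nat) \<Rightarrow> real"
  assumes "q \<le> n + 1"
    and "\<forall>i<q+s. 1 \<le> d i"
    and "P \<in> Hd n d (q + s)"
    and "P \<noteq> (\<lambda>i a. 0)"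
  shows "kappa_star n d q s P \<le> ereal (weyl_norm n d {..<q+s} P) / ereal (dist_Sigma_star n d q s P)"
proof -
  have N: "weyl_norm n d {..<q+s} P > 0"
    using assms(3,4) by (rule weyl_norm_pos)
  consider "dist_Sigma_star n d q s P = 0" | "dist_Sigma_star n d q s P > 0"
    using dist_Sigma_star_nonneg[OF assms(1), of d s P] by linarith
  then show ?thesis
  proof cases
    case 1
    then show ?thesis using N by simp
  next
    case 2
    then show ?thesis
      using kappa_star_le_norm_div_dist[OF assms(1-3) 2] by simp
  qed
qed

end
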